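(* Let $G$ be a finite connected bipartite $\mathcal{C}$-$\mathrm{HH}$ graph with bipartition $(X,Y)$. (i) If the $6$-cycle $C_6$ or the two-squares graph embeds in $G$, then $\mathrm{diam}(G)=3$. (ii) If $\mathrm{diam}(G)=3$, then for each $k\le\Delta(G)$ every $k$-element subset of $X$ and every $k$-element subset of $Y$ has a common neighbour.
   Context: Subgraphs are induced; "embeds" means is isomorphic to an induced subgraph. A homomorphism maps edges to edges. A graph $G$ is $\mathcal{C}$-$\mathrm{HH}$ if every homomorphism from a finite connected induced subgraph of $G$ into $G$ extends to a homomorphism $G\to G$. The two-squares graph is the $6$-cycle $v_1\dots v_6v_1$ with the single chord $v_3v_6$. $\mathrm{diam}(G)$ is the diameter and $\Delta(G)$ the maximum degree. A common neighbour of a vertex set $S$ is a vertex adjacent to every vertex of $S$. *)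

theory Defs
  imports Main
begin

definition graph :: "'a set \<Rightarrow> ('a \<Rightarrow> 'a \<Rightarrow> bool) \<Rightarrow> bool" where
  "graph V E \<longleftrightarrow> finite V \<and> (\<forall>x y. E x y \<longrightarrow> x \<in> V \<and> y \<in> V)
     \<and> (\<forall>x y. E x y \<longrightarrow> E y x) \<and> (\<forall>x. \<not> E x x)"

definition walk :: "'a set \<Rightarrow> ('a \<Rightarrow> 'a \<Rightarrow> bool) \<Rightarrow> 'a list \<Rightarrow> bool" where
  "walk S E xs \<longleftrightarrow> xs \<noteq> [] \<and> set xs \<subseteq> S \<and>
     (\<forall>i. Suc i < length xs \<longrightarrow> E (xs ! i) (xs ! Suc i))"

definition connected :: "'a set \<Rightarrow> ('a \<Rightarrow> 'a \<Rightarrow> bool) \<Rightarrow> bool" where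
  "connected S E \<longleftrightarrow> S \<noteq> {} \<and>
     (\<forall>x\<in>S. \<forall>y\<in>S. \<exists>xs. walk S E xs \<and> hd xs = x \<and> last xs = y)"

definition gdist :: "'a set \<Rightarrow> ('a \<Rightarrow> 'a \<Rightarrow> bool) \<Rightarrow> 'a \<Rightarrow> 'a \<Rightarrow> nat" where
  "gdist V E x y = (LEAST n. \<exists>xs. walk V E xs \<and> hd xs = x \<and> last xs = y \<and> length xs = Suc n)"

definition diam :: "'a set \<Rightarrow> ('a \<Rightarrow> 'a \<Rightarrow> bool) \<Rightarrow> nat" where
  "diam V E = Max {gdist V E x y | x y. x \<in> V \<and> y \<in> V}"

definition max_degree :: "'a set \<Rightarrow> ('a \<Rightarrow> 'a \<Rightarrow> bool) \<Rightarrow> nat" where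
  "max_degree V E = Max ((\<lambda>v. card {u \<in> V. E v u}) ` V)"

definition hom :: "'a set \<Rightarrow> ('a \<Rightarrow> 'a \<Rightarrow> bool) \<Rightarrow> 'b set \<Rightarrow> ('b \<Rightarrow> 'b \<Rightarrow> bool) \<Rightarrow> ('a \<Rightarrow> 'b) \<Rightarrow> bool" where
  "hom S E W F f \<longleftrightarrow> f ` S \<subseteq> W \<and> (\<forall>x\<in>S. \<forall>y\<in>S. E x y \<longrightarrow> F (f x) (f y))"

definition C_HH :: "'a set \<Rightarrow> ('a \<Rightarrow> 'a \<Rightarrow> bool) \<Rightarrow> bool" where
  "C_HH V E \<longleftrightarrow> (\<forall>S f. S \<subseteq> V \<and> finite S \<and> connected S E \<and> hom S E V E f \<longrightarrow>
      (\<exists>g. hom V E V E g \<and> (\<forall>x\<in>S. g x = f x)))"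

definition embeds :: "'b set \<Rightarrow> ('b \<Rightarrow> 'b \<Rightarrow> bool) \<Rightarrow> 'a set \<Rightarrow> ('a \<Rightarrow> 'a \<Rightarrow> bool) \<Rightarrow> bool" where
  "embeds W F V E \<longleftrightarrow> (\<exists>f. inj_on f W \<and> f ` W \<subseteq> V \<and>
      (\<forall>x\<in>W. \<forall>y\<in>W. F x y \<longleftrightarrow> E (f x) (f y)))"

text \<open>The 6-cycle on vertices 0..5 (v_{i+1} is vertex i).\<close>
definition C6_edge :: "nat \<Rightarrow> nat \<Rightarrow> bool" where
  "C6_edge i j \<longleftrightarrow> i < 6 \<and> j < 6 \<and> (j = (i + 1) mod 6 \<or> i = (j + 1) mod 6)"

text \<open>Two-squares graph: C6 plus chord v3 v6, i.e. vertices 2 and 5.\<close>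
definition two_squares_edge :: "nat \<Rightarrow> nat \<Rightarrow> bool" where
  "two_squares_edge i j \<longleftrightarrow> C6_edge i j \<or> (i = 2 \<and> j = 5) \<or> (i = 5 \<and> j = 2)"

definition bipartition :: "'a set \<Rightarrow> ('a \<Rightarrow> 'a \<Rightarrow> bool) \<Rightarrow> 'a set \<Rightarrow> 'a set \<Rightarrow> bool" where
  "bipartition V E X Y \<longleftrightarrow> X \<union> Y = V \<and> X \<inter> Y = {} \<and>
     (\<forall>x y. E x y \<longrightarrow> (x \<in> X \<and> y \<in> Y) \<or> (x \<in> Y \<and> y \<in> X))"

definition common_neighbour :: "'a set \<Rightarrow> ('a \<Rightarrow> 'a \<Rightarrow> bool) \<Rightarrow> 'a set \<Rightarrow> 'a \<Rightarrow> bool" where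
  "common_neighbour V E S v \<longleftrightarrow> v \<in> V \<and> (\<forall>s\<in>S. E v s)"

end

theory Submission
  imports Defs
begin

text \<open>
  (i) In a \<open>\<C>\<close>-HH graph any walk \<open>v\<^sub>0 \<dots> v\<^sub>4\<close> is the image of a homomorphism from an
  induced path on five vertices, and this homomorphism extends to an endomorphism of \<open>G\<close>.
  Both \<open>C\<^sub>6\<close> and the two-squares graph contain such a path whose ends have a common
  neighbour; its image is a common neighbour of \<open>v\<^sub>0\<close> and \<open>v\<^sub>4\<close>. Hence every walk can be
  shortened to length at most three, so \<open>diam G \<le> 3\<close>, and vertices at distance three on the
  embedded path lie on opposite sides and are non-adjacent, so \<open>diam G = 3\<close>.

  (ii) Induction on \<open>k\<close>; sets of size at most two are handled by diameter three and parity.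
  Suppose a \<open>k\<close>-set \<open>B \<subseteq> X\<close>, \<open>k \<ge> 3\<close>, has no common neighbour although all smaller sets do,
  and let \<open>c b\<close> be a common neighbour of \<open>B - {b}\<close>. Extending the automorphism
  \<open>b \<leftrightarrow> c b\<close> of the crown \<open>B \<union> c ` B\<close> shows that \<open>c ` B \<subseteq> Y\<close> has no common neighbour
  either, and folding a new vertex \<open>p \<in> X\<close> onto some \<open>b \<in> B\<close> shows the same for
  \<open>insert p (B - {b})\<close>. By such exchanges no \<open>k\<close>-subset of \<open>X\<close> or of \<open>Y\<close> has a common
  neighbour, contradicting \<open>k \<le> \<Delta>(G)\<close>.
\<close>

section \<open>Walks, connectivity and distance\<close>

lemma walk_singleton [simp]: "walk S E [x] \<longleftrightarrow> x \<in> S"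
  unfolding walk_def by auto

lemma walk_Cons_Cons [simp]:
  "walk S E (x # y # xs) \<longleftrightarrow> x \<in> S \<and> E x y \<and> walk S E (y # xs)"
  unfolding walk_def by (auto simp: nth_Cons' less_Suc_eq_0_disj split: if_splits)

lemma walk_mono: "walk S E xs \<Longrightarrow> S \<subseteq> T \<Longrightarrow> walk T E xs"
  unfolding walk_def by blast

lemma walk_append:
  "walk S E xs \<Longrightarrow> walk S E ys \<Longrightarrow> E (last xs) (hd ys) \<Longrightarrow> walk S E (xs @ ys)"
proof (induction xs rule: induct_list012)
  case (2 x)
  then show ?case by (cases ys) auto
next
  case (3 x y zs)
  then show ?case by simp
qed (simp add: walk_def)

lemma walk_rev:
  assumes sym: "\<And>x y. E x y \<Longrightarrow> E y x"
  shows "walk S E xs \<Longrightarrow> walk S E (rev xs)"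
proof (induction xs rule: induct_list012)
  case (3 x y zs)
  then have "walk S E (rev (y # zs) @ [x])"
    by (intro walk_append) (auto simp: sym)
  then show ?case by simp
qed (auto simp: walk_def)

lemma walk_take: "walk S E xs \<Longrightarrow> 0 < n \<Longrightarrow> walk S E (take n xs)"
  unfolding walk_def by (auto dest: in_set_takeD)

lemma walk_nth_edge: "walk S E ws \<Longrightarrow> Suc i < length ws \<Longrightarrow> E (ws ! i) (ws ! Suc i)"
  unfolding walk_def by blast

lemma walk_join:
  assumes "walk S E xs" "walk S E ys" "last xs = hd ys"
  shows "walk S E (xs @ tl ys)" "hd (xs @ tl ys) = hd xs" "last (xs @ tl ys) = last ys"
proof -
  obtain y ys' where ys: "ys = y # ys'" using assms(2) by (cases ys) (auto simp: walk_def)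
  have "xs \<noteq> []" using assms(1) by (simp add: walk_def)
  then show "walk S E (xs @ tl ys)" "hd (xs @ tl ys) = hd xs" "last (xs @ tl ys) = last ys"
    using assms ys by (cases ys'; auto intro: walk_append)+
qed

lemma connectedI_hub:
  assumes sym: "\<And>x y. E x y \<Longrightarrow> E y x" and "h \<in> S"
    and walks: "\<And>x. x \<in> S \<Longrightarrow> \<exists>xs. walk S E xs \<and> hd xs = h \<and> last xs = x"
  shows "connected S E"
  unfolding connected_def
proof (intro conjI ballI)
  show "S \<noteq> {}" using \<open>h \<in> S\<close> by auto
  fix x y assume "x \<in> S" "y \<in> S"
  then obtain px py where px: "walk S E px" "hd px = h" "last px = x"
    and py: "walk S E py" "hd py = h" "last py = y"
    using walks by meson
  have "px \<noteq> []" using px(1) by (simp add: walk_def)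
  then have "walk S E (rev px)" "hd (rev px) = x" "last (rev px) = hd py"
    using px py walk_rev[OF sym] by (auto simp: hd_rev last_rev)
  then show "\<exists>xs. walk S E xs \<and> hd xs = x \<and> last xs = y"
    using walk_join[OF _ py(1)] py(3) by metis
qed

lemma connected_walk_set:
  assumes sym: "\<And>x y. E x y \<Longrightarrow> E y x" and w: "walk S E xs" and S: "set xs = S"
  shows "connected S E"
proof (rule connectedI_hub[OF sym])
  have "xs \<noteq> []" using w by (simp add: walk_def)
  then show "hd xs \<in> S" using S by auto
  fix x assume "x \<in> S"
  then obtain i where i: "i < length xs" "xs ! i = x" using S by (metis in_set_conv_nth)
  have "walk S E (take (Suc i) xs)" using walk_take[OF w] by simp
  moreover have "hd (take (Suc i) xs) = hd xs" by (simp add: hd_take)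
  moreover have "last (take (Suc i) xs) = x" using i by (simp add: take_Suc_conv_app_nth)
  ultimately show "\<exists>ys. walk S E ys \<and> hd ys = hd xs \<and> last ys = x" by blast
qed

lemma connected_insert:
  assumes sym: "\<And>x y. E x y \<Longrightarrow> E y x"
    and S: "connected S E" and "y \<in> S" "E y x"
  shows "connected (insert x S) E"
proof (rule connectedI_hub[OF sym])
  show "y \<in> insert x S" using \<open>y \<in> S\<close> by simp
  fix z assume "z \<in> insert x S"
  then consider "z = x" | "z \<in> S" by blast
  then show "\<exists>zs. walk (insert x S) E zs \<and> hd zs = y \<and> last zs = z"
  proof cases
    case 1
    then show ?thesis using \<open>y \<in> S\<close> \<open>E y x\<close> by (intro exI[of _ "[y, x]"]) auto
  next
    case 2
    then show ?thesis using S \<open>y \<in> S\<close> unfolding connected_def by (meson subset_insertI walk_mono)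
  qed
qed

lemma gdist_le_walk:
  assumes "walk V E xs"
  shows "gdist V E (hd xs) (last xs) \<le> length xs - 1"
  unfolding gdist_def
proof (rule Least_le)
  show "\<exists>ys. walk V E ys \<and> hd ys = hd xs \<and> last ys = last xs \<and> length ys = Suc (length xs - 1)"
    using assms by (auto simp: walk_def)
qed

lemma shortest_walk:
  assumes "connected V E" "x \<in> V" "y \<in> V"
  obtains xs where "walk V E xs" "hd xs = x" "last xs = y" "length xs = Suc (gdist V E x y)"
proof -
  obtain xs where "walk V E xs" "hd xs = x" "last xs = y"
    using assms unfolding connected_def by blast
  then have "\<exists>n xs. walk V E xs \<and> hd xs = x \<and> last xs = y \<and> length xs = Suc n"
    by (metis Suc_pred length_greater_0_conv walk_def)
  from LeastI_ex[OF this] show thesis using that unfolding gdist_def by blast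
qed

lemma gdist_self: "x \<in> V \<Longrightarrow> gdist V E x x = 0"
  using gdist_le_walk[of V E "[x]"] by simp

lemma gdist_eq_0D:
  assumes "connected V E" "x \<in> V" "y \<in> V" "gdist V E x y = 0"
  shows "x = y"
proof -
  obtain xs where "walk V E xs" "hd xs = x" "last xs = y" "length xs = Suc (gdist V E x y)"
    using shortest_walk[OF assms(1-3)] .
  then show ?thesis using assms(4) by (auto simp: length_Suc_conv)
qed

lemma gdist_eq_1D:
  assumes "connected V E" "x \<in> V" "y \<in> V" "gdist V E x y = 1"
  shows "E x y"
proof -
  obtain xs where "walk V E xs" "hd xs = x" "last xs = y" "length xs = Suc (gdist V E x y)"
    using shortest_walk[OF assms(1-3)] .
  then show ?thesis using assms(4) by (auto simp: length_Suc_conv)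
qed

lemma gdist_eq_2D:
  assumes "connected V E" "x \<in> V" "y \<in> V" "gdist V E x y = 2"
  shows "\<exists>m\<in>V. E x m \<and> E m y"
proof -
  obtain xs where "walk V E xs" "hd xs = x" "last xs = y" "length xs = Suc (gdist V E x y)"
    using shortest_walk[OF assms(1-3)] .
  then show ?thesis using assms(4) by (auto simp: length_Suc_conv numeral_2_eq_2)
qed

lemma connected_has_neighbour:
  assumes "connected V E" "s \<in> V" "t \<in> V" "s \<noteq> t"
  shows "\<exists>u. E s u"
proof -
  obtain xs where xs: "walk V E xs" "hd xs = s" "last xs = t"
    using assms unfolding connected_def by blast
  then show ?thesis
    using \<open>s \<noteq> t\<close> by (cases xs rule: remdups_adj.cases) (auto simp: walk_def[where xs = "[]"])
qed

lemma gdist_le_diam: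
  assumes "finite V" "x \<in> V" "y \<in> V"
  shows "gdist V E x y \<le> diam V E"
  unfolding diam_def using assms by (intro Max_ge finite_image_set2) auto

lemma diam_attained:
  assumes "finite V" "V \<noteq> {}"
  shows "\<exists>x\<in>V. \<exists>y\<in>V. gdist V E x y = diam V E"
proof -
  have "diam V E \<in> {gdist V E x y | x y. x \<in> V \<and> y \<in> V}"
    unfolding diam_def using assms by (intro Max_in finite_image_set2) auto
  then show ?thesis by force
qed

lemma diam_eqI:
  assumes "finite V" and le: "\<And>x y. x \<in> V \<Longrightarrow> y \<in> V \<Longrightarrow> gdist V E x y \<le> n"
    and "x \<in> V" "y \<in> V" "gdist V E x y = n"
  shows "diam V E = n"
  unfolding diam_def using assms by (intro Max_eqI finite_image_set2) auto

section \<open>Extending homomorphisms in \<open>\<C>\<close>-HH graphs\<close>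

definition induced_path :: "('a \<Rightarrow> 'a \<Rightarrow> bool) \<Rightarrow> 'a list \<Rightarrow> bool" where
  "induced_path E ps \<longleftrightarrow> distinct ps \<and>
     (\<forall>i<length ps. \<forall>j<length ps. E (ps ! i) (ps ! j) \<longleftrightarrow> i = Suc j \<or> j = Suc i)"

lemma induced_path_C6: "induced_path C6_edge [2, 3, 4, 5, 0]"
  unfolding induced_path_def C6_edge_def by (simp add: less_Suc_eq all_conj_distrib)

lemma induced_path_two_squares: "induced_path two_squares_edge [1, 0, 5, 4, 3]"
  unfolding induced_path_def two_squares_edge_def C6_edge_def by (simp add: less_Suc_eq all_conj_distrib)

lemma induced_path_walk:
  "induced_path E ps \<Longrightarrow> ps \<noteq> [] \<Longrightarrow> set ps \<subseteq> S \<Longrightarrow> walk S E ps"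
  unfolding induced_path_def walk_def by auto

lemma induced_path_map:
  assumes "inj_on \<phi> W" "set ps \<subseteq> W" and iso: "\<forall>x\<in>W. \<forall>y\<in>W. F x y \<longleftrightarrow> E (\<phi> x) (\<phi> y)"
    and "induced_path F ps"
  shows "induced_path E (map \<phi> ps)"
proof -
  have "distinct (map \<phi> ps)"
    using assms by (auto simp: induced_path_def distinct_map intro: inj_on_subset)
  moreover have "E (\<phi> (ps ! i)) (\<phi> (ps ! j)) \<longleftrightarrow> F (ps ! i) (ps ! j)"
    if "i < length ps" "j < length ps" for i j
    using iso that \<open>set ps \<subseteq> W\<close> by (meson nth_mem subsetD)
  ultimately show ?thesis using \<open>induced_path F ps\<close> by (simp add: induced_path_def)
qed

lemma C_HH_lift_induced_path:
  assumes G: "graph V E" and H: "C_HH V E"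
    and ps: "induced_path E ps" "set ps \<subseteq> V"
    and ws: "walk V E ws" "length ws = length ps"
  obtains g where "hom V E V E g" "\<And>i. i < length ps \<Longrightarrow> g (ps ! i) = ws ! i"
proof -
  have sym: "\<And>x y. E x y \<Longrightarrow> E y x" using G by (simp add: graph_def)
  have "ps \<noteq> []" using ws by (auto simp: walk_def)
  define f where "f x = the (map_of (zip ps ws) x)" for x
  have f: "f (ps ! i) = ws ! i" if "i < length ps" for i
    using ps(1) ws(2) that by (simp add: f_def induced_path_def map_of_zip_nth)
  have "hom (set ps) E V E f"
    unfolding hom_def
  proof (intro conjI ballI impI)
    have "ws ! i \<in> V" if "i < length ps" for i
      using ws that nth_mem[of i ws] by (auto simp: walk_def)
    then show "f ` set ps \<subseteq> V" using f by (auto simp: in_set_conv_nth)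
    fix x y assume "x \<in> set ps" "y \<in> set ps" "E x y"
    then obtain i j where "i < length ps" "j < length ps" "x = ps ! i" "y = ps ! j"
      "i = Suc j \<or> j = Suc i"
      using ps(1) by (auto simp: in_set_conv_nth induced_path_def)
    then show "E (f x) (f y)" using f walk_nth_edge[OF ws(1)] ws(2) sym by auto
  qed
  moreover have "connected (set ps) E"
    using connected_walk_set[OF sym induced_path_walk[OF ps(1) \<open>ps \<noteq> []\<close>]] by simp
  ultimately obtain g where "hom V E V E g" "\<forall>x\<in>set ps. g x = f x"
    using H ps(2) unfolding C_HH_def by blast
  then show thesis using that f by simp
qed

lemma hom_common_neighbour:
  assumes "hom V E V E g" "common_neighbour V E S v" "S \<subseteq> V"
  shows "common_neighbour V E (g ` S) (g v)"
  using assms unfolding hom_def common_neighbour_def by blast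

lemma C_HH_fold:
  assumes G: "graph V E" and H: "C_HH V E"
    and T: "T \<subseteq> V" "connected T E" and "x \<in> T" "y \<in> V"
    and nbrs: "\<And>t. t \<in> T \<Longrightarrow> E x t \<Longrightarrow> E y t"
  obtains g where "hom V E V E g" "g x = y" "\<And>t. t \<in> T \<Longrightarrow> t \<noteq> x \<Longrightarrow> g t = t"
proof -
  have sym: "\<And>u v. E u v \<Longrightarrow> E v u" and irrefl: "\<And>u. \<not> E u u" and "finite T"
    using G T(1) finite_subset unfolding graph_def by blast+
  define f where "f t = (if t = x then y else t)" for t
  have "hom T E V E f"
    unfolding hom_def
  proof (intro conjI ballI impI)
    show "f ` T \<subseteq> V" using T(1) \<open>y \<in> V\<close> by (auto simp: f_def)
    fix u v assume "u \<in> T" "v \<in> T" "E u v"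
    then show "E (f u) (f v)" using nbrs sym irrefl by (cases "u = x"; cases "v = x") (auto simp: f_def)
  qed
  then obtain g where "hom V E V E g" "\<forall>t\<in>T. g t = f t"
    using H T \<open>finite T\<close> unfolding C_HH_def by blast
  then show thesis using that \<open>x \<in> T\<close> by (simp add: f_def)
qed

lemma C_HH_shortcut:
  assumes G: "graph V E" and H: "C_HH V E"
    and ps: "induced_path E ps" "length ps = 5" "set ps \<subseteq> V"
    and apex: "m \<in> V" "E m (hd ps)" "E m (last ps)"
    and ws: "walk V E ws" "length ws = 5"
  shows "\<exists>u\<in>V. E (hd ws) u \<and> E u (last ws)"
proof -
  obtain g where g: "hom V E V E g" "\<And>i. i < 5 \<Longrightarrow> g (ps ! i) = ws ! i"
    using C_HH_lift_induced_path[OF G H ps(1,3) ws(1)] ws(2) ps(2) by metis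
  have "hd ps = ps ! 0" "last ps = ps ! 4" "hd ws = ws ! 0" "last ws = ws ! 4"
    using ps(2) ws(2) by (simp_all add: hd_conv_nth last_conv_nth flip: length_greater_0_conv)
  moreover have "hd ps \<in> V" "last ps \<in> V"
    using ps(2,3) hd_in_set last_in_set by (metis list.size(3) subsetD zero_neq_numeral)+
  moreover have "g (ps ! 0) = ws ! 0" "g (ps ! 4) = ws ! 4" using g(2) by simp_all
  ultimately have "E (g m) (hd ws)" "E (g m) (last ws)" "g m \<in> V"
    using g(1) apex unfolding hom_def by (metis image_subset_iff)+
  then show ?thesis using G unfolding graph_def by blast
qed

lemma walk_shorten:
  assumes shortcut: "\<And>ws. walk V E ws \<Longrightarrow> length ws = 5 \<Longrightarrow> \<exists>u\<in>V. E (hd ws) u \<and> E u (last ws)"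
  shows "walk V E xs \<Longrightarrow> \<exists>ys. walk V E ys \<and> hd ys = hd xs \<and> last ys = last xs \<and> length ys \<le> 4"
proof (induction "length xs" arbitrary: xs rule: less_induct)
  case less
  show ?case
  proof (cases "length xs \<le> 4")
    case True
    then show ?thesis using less.prems by blast
  next
    case False
    then have "Suc (Suc (Suc (Suc (Suc 0)))) \<le> length xs" by simp
    then obtain a b c d e rest where xs: "xs = a # b # c # d # e # rest"
      by (auto simp: Suc_le_length_iff)
    have "walk V E [a, b, c, d, e]" using less.prems xs by (simp add: walk_def[of _ _ "e # rest"])
    then obtain u where "u \<in> V" "E a u" "E u e" using shortcut by fastforce
    then have "walk V E (a # u # e # rest)" using less.prems xs by simp
    then show ?thesis using less.hyps[of "a # u # e # rest"] xs by fastforce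
  qed
qed

lemma gdist_le_3_if_shortcut:
  assumes "connected V E" "x \<in> V" "y \<in> V"
    and shortcut: "\<And>ws. walk V E ws \<Longrightarrow> length ws = 5 \<Longrightarrow> \<exists>u\<in>V. E (hd ws) u \<and> E u (last ws)"
  shows "gdist V E x y \<le> 3"
proof -
  obtain xs where "walk V E xs" "hd xs = x" "last xs = y"
    using assms(1-3) unfolding connected_def by blast
  then obtain ys where "walk V E ys" "hd ys = x" "last ys = y" "length ys \<le> 4"
    using walk_shorten[OF shortcut] by metis
  then show ?thesis using gdist_le_walk[of V E ys] by simp
qed

lemma embeds_apex_path:
  assumes "embeds W F V E" and ps: "induced_path F ps" "ps \<noteq> []" "set ps \<subseteq> W"
    and apex: "m \<in> W" "F m (hd ps)" "F m (last ps)"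
  obtains qs m' where "induced_path E qs" "length qs = length ps" "set qs \<subseteq> V"
    "m' \<in> V" "E m' (hd qs)" "E m' (last qs)"
proof -
  obtain \<phi> where \<phi>: "inj_on \<phi> W" "\<phi> ` W \<subseteq> V" "\<forall>x\<in>W. \<forall>y\<in>W. F x y \<longleftrightarrow> E (\<phi> x) (\<phi> y)"
    using assms(1) unfolding embeds_def by blast
  have "hd ps \<in> W" "last ps \<in> W" using ps(2,3) by auto
  then have "E (\<phi> m) (hd (map \<phi> ps))" "E (\<phi> m) (last (map \<phi> ps))"
    using \<phi>(3) apex ps(2) by (simp_all add: hd_map last_map)
  moreover have "set (map \<phi> ps) \<subseteq> V" "\<phi> m \<in> V" using \<phi>(2) ps(3) apex(1) by auto
  ultimately show thesis
    using that induced_path_map[OF \<phi>(1) ps(3) \<phi>(3) ps(1)] by simp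
qed

section \<open>Bipartite graphs and the diameter\<close>

locale bipartite_graph =
  fixes V :: "'a set" and E :: "'a \<Rightarrow> 'a \<Rightarrow> bool" and P Q :: "'a set"
  assumes is_graph: "graph V E" and is_bipartition: "bipartition V E P Q"
begin

lemma finite_V: "finite V"
  using is_graph by (simp add: graph_def)

lemma edge_sym: "E x y \<Longrightarrow> E y x"
  using is_graph by (simp add: graph_def)

lemma edge_irrefl: "\<not> E x x"
  using is_graph by (simp add: graph_def)

lemma V_eq: "V = P \<union> Q"
  using is_bipartition by (simp add: bipartition_def)

lemma P_Q_disjoint: "P \<inter> Q = {}"
  using is_bipartition by (simp add: bipartition_def)

lemma edge_P_Q: "E x y \<Longrightarrow> x \<in> P \<Longrightarrow> y \<in> Q"
  using is_bipartition unfolding bipartition_def by blast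

lemma no_edge_P_P: "x \<in> P \<Longrightarrow> y \<in> P \<Longrightarrow> \<not> E x y"
  using is_bipartition unfolding bipartition_def by blast

lemma no_edge_Q_Q: "x \<in> Q \<Longrightarrow> y \<in> Q \<Longrightarrow> \<not> E x y"
  using is_bipartition unfolding bipartition_def by blast

lemma edge_crosses: "E x y \<Longrightarrow> x \<in> P \<longleftrightarrow> y \<notin> P"
  using is_bipartition unfolding bipartition_def by blast

lemma swap: "bipartite_graph V E Q P"
  using is_graph is_bipartition unfolding bipartite_graph_def bipartition_def by blast

lemma walk_parity: "walk V E xs \<Longrightarrow> hd xs \<in> P \<longleftrightarrow> (last xs \<in> P \<longleftrightarrow> odd (length xs))"
proof (induction xs rule: induct_list012)
  case (3 x y zs)
  then show ?case using edge_crosses[of x y] by auto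
qed (simp_all add: walk_def)

lemma gdist_parity:
  assumes "connected V E" "x \<in> V" "y \<in> V"
  shows "x \<in> P \<longleftrightarrow> (y \<in> P \<longleftrightarrow> even (gdist V E x y))"
proof -
  obtain xs where "walk V E xs" "hd xs = x" "last xs = y" "length xs = Suc (gdist V E x y)"
    using shortest_walk[OF assms] .
  then show ?thesis using walk_parity by fastforce
qed

lemma gdist_opposite_ge_3:
  assumes "connected V E" "x \<in> V" "y \<in> V" "x \<in> P \<longleftrightarrow> y \<notin> P" "\<not> E x y"
  shows "3 \<le> gdist V E x y"
proof -
  have "odd (gdist V E x y)" using gdist_parity[OF assms(1-3)] assms(4) by blast
  moreover have "gdist V E x y \<noteq> 1" using gdist_eq_1D[OF assms(1-3)] assms(5) by blast
  ultimately show ?thesis by (auto elim!: oddE)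
qed

lemma same_side_common_neighbour:
  assumes "connected V E" "diam V E = 3" "x \<in> P" "y \<in> P" "x \<noteq> y"
  shows "\<exists>m. common_neighbour V E {x, y} m"
proof -
  have V: "x \<in> V" "y \<in> V" using assms(3,4) V_eq by auto
  have "even (gdist V E x y)" using gdist_parity[OF assms(1) V] assms(3,4) by blast
  moreover have "gdist V E x y \<noteq> 0" using gdist_eq_0D[OF assms(1) V] assms(5) by blast
  moreover have "gdist V E x y \<le> 3" using gdist_le_diam[OF finite_V V, of E] assms(2) by simp
  ultimately have "gdist V E x y = 2" by (auto elim!: evenE)
  then show ?thesis
    using gdist_eq_2D[OF assms(1) V] edge_sym unfolding common_neighbour_def by blast
qed

lemma diam_eq_3_if_apex_path:
  assumes C: "connected V E" and H: "C_HH V E"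
    and ps: "induced_path E ps" "length ps = 5" "set ps \<subseteq> V"
    and apex: "m \<in> V" "E m (hd ps)" "E m (last ps)"
  shows "diam V E = 3"
proof -
  note le_3 = gdist_le_3_if_shortcut[OF C _ _ C_HH_shortcut[OF is_graph H ps apex]]
  have V: "ps ! 0 \<in> V" "ps ! 3 \<in> V" using ps(2,3) by (simp_all add: subset_code(1))
  have "E (ps ! 0) (ps ! 1)" "E (ps ! 1) (ps ! 2)" "E (ps ! 2) (ps ! 3)"
    and "\<not> E (ps ! 0) (ps ! 3)"
    using ps(1,2) unfolding induced_path_def by auto
  then have "3 \<le> gdist V E (ps ! 0) (ps ! 3)"
    using gdist_opposite_ge_3[OF C V] edge_crosses by blast
  then have "gdist V E (ps ! 0) (ps ! 3) = 3" using le_3[OF V] by simp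
  then show ?thesis using diam_eqI[OF finite_V le_3 V] by blast
qed

lemma diam_eq_3_if_embeds:
  assumes "connected V E" "C_HH V E"
    and "embeds {0..<6} C6_edge V E \<or> embeds {0..<6} two_squares_edge V E"
  shows "diam V E = 3"
  using assms(3)
proof
  assume "embeds {0..<6} C6_edge V E"
  then show ?thesis
    by (rule embeds_apex_path[OF _ induced_path_C6, where m = 1])
      (auto simp: C6_edge_def intro: diam_eq_3_if_apex_path[OF assms(1,2)])
next
  assume "embeds {0..<6} two_squares_edge V E"
  then show ?thesis
    by (rule embeds_apex_path[OF _ induced_path_two_squares, where m = 2])
      (auto simp: two_squares_edge_def C6_edge_def intro: diam_eq_3_if_apex_path[OF assms(1,2)])
qed

end

section \<open>Crowns\<close>

lemma exists_third_element:
  assumes "finite B" "3 \<le> card B"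
  shows "\<exists>m\<in>B. m \<noteq> a \<and> m \<noteq> b"
proof -
  have "card B - card {a, b} \<le> card (B - {a, b})" by (rule diff_card_le_card_Diff) simp
  moreover have "card {a, b} \<le> 2" by (simp add: card_insert_if)
  ultimately have "card (B - {a, b}) > 0" using assms by linarith
  then have "B - {a, b} \<noteq> {}" by (metis card.empty less_irrefl)
  then show ?thesis by blast
qed

text \<open>\<open>B \<union> c ` B\<close> induces \<open>K\<^sub>k\<^sub>,\<^sub>k\<close> minus the perfect matching \<open>b \<mapsto> c b\<close>.\<close>

locale crown = bipartite_graph +
  fixes B :: "'a set" and c :: "'a \<Rightarrow> 'a"
  assumes B_subset: "B \<subseteq> P" and card_B: "3 \<le> card B"
    and B_no_common_neighbour: "\<not> (\<exists>v. common_neighbour V E B v)"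
    and partner: "\<And>b. b \<in> B \<Longrightarrow> common_neighbour V E (B - {b}) (c b)"
begin

lemma finite_B: "finite B"
  using card_B by (metis card.infinite not_numeral_le_zero)

lemma partner_in_V: "b \<in> B \<Longrightarrow> c b \<in> V"
  using partner by (simp add: common_neighbour_def)

lemma partner_adj: "b \<in> B \<Longrightarrow> b' \<in> B \<Longrightarrow> b' \<noteq> b \<Longrightarrow> E (c b) b'"
  using partner by (simp add: common_neighbour_def)

lemma partner_not_adj: "b \<in> B \<Longrightarrow> \<not> E (c b) b"
  using B_no_common_neighbour partner_adj partner_in_V unfolding common_neighbour_def by metis

lemma partner_in_Q: "b \<in> B \<Longrightarrow> c b \<in> Q"
  using exists_third_element[OF finite_B card_B, of b b] partner_adj edge_sym edge_P_Q B_subset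
  by blast

lemma partner_notin_B: "b \<in> B \<Longrightarrow> c b \<notin> B"
  using partner_in_Q B_subset P_Q_disjoint by blast

lemma inj_on_partner: "inj_on c B"
  using partner_adj partner_not_adj by (metis inj_onI)

lemma crown_connected:
  assumes "B' \<subseteq> B" "2 \<le> card B'"
  shows "connected (B \<union> c ` B') E"
proof -
  obtain m1 m2 where m: "m1 \<in> B'" "m2 \<in> B'" "m1 \<noteq> m2"
    using assms(2) by (metis card_le_Suc0_iff_eq not_less_eq_eq numeral_2_eq_2 card.infinite
        not_numeral_le_zero)
  let ?T = "B \<union> c ` B'"
  show ?thesis
  proof (rule connectedI_hub[OF edge_sym])
    show "c m1 \<in> ?T" using m by blast
    fix t assume "t \<in> ?T"
    then consider "t \<in> B" "t \<noteq> m1" | "t = m1" | b where "b \<in> B'" "t = c b" by blast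
    then show "\<exists>ts. walk ?T E ts \<and> hd ts = c m1 \<and> last ts = t"
    proof cases
      case 1
      then show ?thesis using m assms(1) partner_adj
        by (intro exI[of _ "[c m1, t]"]) auto
    next
      case 2
      obtain b where "b \<in> B" "b \<noteq> m1" "b \<noteq> m2"
        using exists_third_element[OF finite_B card_B] by blast
      moreover have "E (c m2) m1" using m assms(1) partner_adj by blast
      ultimately show ?thesis using 2 m assms(1) partner_adj edge_sym
        by (intro exI[of _ "[c m1, b, c m2, m1]"]) auto
    next
      case 3
      show ?thesis
      proof (cases "b = m1")
        case True
        then show ?thesis using 3 m by (intro exI[of _ "[c m1]"]) auto
      next
        case False
        obtain b' where "b' \<in> B" "b' \<noteq> m1" "b' \<noteq> b"
          using exists_third_element[OF finite_B card_B] by blast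
        then show ?thesis using 3 False m assms(1) partner_adj edge_sym
          by (intro exI[of _ "[c m1, b', c b]"]) auto
      qed
    qed
  qed
qed

lemma crown_connected_insert_path:
  assumes "b \<in> B" "E b y" "E y p"
  shows "connected (insert p (insert y (B \<union> c ` (B - {b})))) E"
proof -
  have "2 \<le> card (B - {b})" using card_B finite_B \<open>b \<in> B\<close> by simp
  then have "connected (B \<union> c ` (B - {b})) E" by (intro crown_connected) auto
  then have "connected (insert y (B \<union> c ` (B - {b}))) E"
    using connected_insert[where E = E, OF edge_sym] assms by blast
  then show ?thesis using connected_insert[where E = E, OF edge_sym] \<open>E y p\<close> by blast
qed

lemma exchange_no_common_neighbour:
  assumes H: "C_HH V E" and "b1 \<in> B" "p \<in> P" "p \<notin> B"
    and y: "common_neighbour V E {p, b1} y"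
  shows "\<not> (\<exists>v. common_neighbour V E (insert p (B - {b1})) v)"
proof
  assume "\<exists>v. common_neighbour V E (insert p (B - {b1})) v"
  then obtain z where z: "common_neighbour V E (insert p (B - {b1})) z" ..
  define T where "T = insert p (insert y (B \<union> c ` (B - {b1})))"
  have "y \<in> V" "E b1 y" "E y p" using y edge_sym by (auto simp: common_neighbour_def)
  then have conn: "connected T E"
    unfolding T_def using crown_connected_insert_path[OF \<open>b1 \<in> B\<close>] by blast
  have T_V: "T \<subseteq> V"
    unfolding T_def using \<open>y \<in> V\<close> \<open>p \<in> P\<close> B_subset partner_in_V V_eq by blast
  txt \<open>Folding \<open>p\<close> onto \<open>b1\<close> is possible because the partner \<open>c b1\<close>, the one vertex
    of the crown not adjacent to \<open>b1\<close>, has been left out of \<open>T\<close>.\<close>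
  have nbrs: "E b1 t" if "t \<in> T" "E p t" for t
  proof -
    consider "t = p" | "t = y" | "t \<in> B" | b where "b \<in> B - {b1}" "t = c b"
      using \<open>t \<in> T\<close> unfolding T_def by blast
    then show ?thesis
      using \<open>E p t\<close> \<open>E b1 y\<close> edge_irrefl no_edge_P_P[OF \<open>p \<in> P\<close>] B_subset
        partner_adj[OF _ \<open>b1 \<in> B\<close>] edge_sym
      by cases blast+
  qed
  have "p \<in> T" "b1 \<in> V" using \<open>b1 \<in> B\<close> B_subset V_eq by (auto simp: T_def)
  obtain g where g: "hom V E V E g" "g p = b1" "\<And>t. t \<in> T \<Longrightarrow> t \<noteq> p \<Longrightarrow> g t = t"
    using C_HH_fold[OF is_graph H T_V conn \<open>p \<in> T\<close> \<open>b1 \<in> V\<close> nbrs] by blast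
  have "g t = t" if "t \<in> B - {b1}" for t
    using g(3) that \<open>p \<notin> B\<close> by (auto simp: T_def)
  then have "g ` insert p (B - {b1}) = insert b1 (B - {b1})"
    using g(2) by simp
  also have "\<dots> = B" using \<open>b1 \<in> B\<close> by blast
  finally have "common_neighbour V E B (g z)"
    using hom_common_neighbour[OF g(1) z] T_V \<open>p \<in> T\<close> by (auto simp: T_def)
  then show False using B_no_common_neighbour by blast
qed

definition swap_partner :: "'a \<Rightarrow> 'a" where
  "swap_partner u = (if u \<in> B then c u else inv_into B c u)"

lemma swap_partner_partner: "b \<in> B \<Longrightarrow> swap_partner (c b) = b"
  using partner_notin_B inv_into_f_f[OF inj_on_partner] by (simp add: swap_partner_def)

lemma hom_swap_partner: "hom (B \<union> c ` B) E V E swap_partner"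
  unfolding hom_def
proof (intro conjI ballI impI)
  have "swap_partner b \<in> V" "swap_partner (c b) \<in> V" if "b \<in> B" for b
    using that swap_partner_partner partner_in_V B_subset V_eq by (auto simp: swap_partner_def)
  then show "swap_partner ` (B \<union> c ` B) \<subseteq> V" by blast
  fix u w assume "u \<in> B \<union> c ` B" "w \<in> B \<union> c ` B" "E u w"
  then consider "u \<in> B" "w \<in> B" | b where "b \<in> B" "u \<in> B" "w = c b"
    | b where "b \<in> B" "u = c b" "w \<in> B" | b b' where "b \<in> B" "b' \<in> B" "u = c b" "w = c b'"
    by blast
  then show "E (swap_partner u) (swap_partner w)"
  proof cases
    case 1
    then show ?thesis using \<open>E u w\<close> no_edge_P_P B_subset by blast
  next
    case (2 b)
    then have "u \<noteq> b" using \<open>E u w\<close> partner_not_adj edge_sym by blast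
    then show ?thesis using 2 swap_partner_partner partner_adj by (simp add: swap_partner_def)
  next
    case (3 b)
    then have "w \<noteq> b" using \<open>E u w\<close> partner_not_adj by blast
    then show ?thesis using 3 swap_partner_partner partner_adj edge_sym by (simp add: swap_partner_def)
  next
    case 4
    then show ?thesis using \<open>E u w\<close> partner_in_Q no_edge_Q_Q by blast
  qed
qed

lemma partners_no_common_neighbour:
  assumes H: "C_HH V E"
  shows "\<not> (\<exists>v. common_neighbour V E (c ` B) v)"
proof
  assume "\<exists>v. common_neighbour V E (c ` B) v"
  then obtain x where x: "common_neighbour V E (c ` B) x" ..
  have "connected (B \<union> c ` B) E" using crown_connected card_B by simp
  moreover have "B \<union> c ` B \<subseteq> V" using partner_in_V B_subset V_eq by auto
  ultimately obtain g where g: "hom V E V E g" "\<forall>u\<in>B \<union> c ` B. g u = swap_partner u"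
    using H hom_swap_partner finite_B unfolding C_HH_def by blast
  have "g (c b) = b" if "b \<in> B" for b using that g(2) swap_partner_partner by simp
  then have "g ` c ` B = B" by (simp add: image_image)
  moreover have "c ` B \<subseteq> V" using partner_in_V by blast
  ultimately have "common_neighbour V E B (g x)" using hom_common_neighbour[OF g(1) x] by simp
  then show False using B_no_common_neighbour by blast
qed

end

section \<open>Common neighbours of \<open>k\<close>-sets\<close>

lemma exchange_closed_k_subsets:
  assumes "finite P"
    and step: "\<And>B b w. B \<subseteq> P \<Longrightarrow> card B = k \<Longrightarrow> \<Phi> B \<Longrightarrow> b \<in> B \<Longrightarrow> w \<in> P - B \<Longrightarrow>
      \<Phi> (insert w (B - {b}))"
    and W: "W \<subseteq> P" "card W = k"
  shows "B \<subseteq> P \<Longrightarrow> card B = k \<Longrightarrow> \<Phi> B \<Longrightarrow> \<Phi> W"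
proof (induction "card (W - B)" arbitrary: B)
  case 0
  have "finite W" "finite B" using \<open>finite P\<close> W(1) 0 finite_subset by blast+
  then have "W \<subseteq> B" using 0 by simp
  then have "W = B" using card_subset_eq[OF \<open>finite B\<close>] W(2) 0 by simp
  then show ?case using 0 by simp
next
  case (Suc n)
  have "finite W" "finite B" using \<open>finite P\<close> W(1) Suc.prems(1) finite_subset by blast+
  obtain w where w: "w \<in> W" "w \<notin> B" using Suc.hyps(2) by (metis card.empty Diff_eq_empty_iff
        nat.distinct(1) subsetI)
  have "\<not> B \<subseteq> W"
    using card_subset_eq[OF \<open>finite W\<close>] W(2) Suc.prems(2) w by auto
  then obtain b where b: "b \<in> B" "b \<notin> W" by blast
  let ?B = "insert w (B - {b})"
  have "?B \<subseteq> P" "card ?B = k" "\<Phi> ?B"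
    using w b W(1) Suc.prems step[of B b w] \<open>finite B\<close> card_gt_0_iff[of B]
    by (auto simp: card_insert_if)
  moreover have "W - ?B = (W - B) - {w}" using b by auto
  then have "card (W - ?B) = n" using Suc.hyps(2) w \<open>finite W\<close> by (simp add: card_Diff_singleton)
  ultimately show ?case using Suc.hyps(1) by blast
qed

context bipartite_graph
begin

lemma obtain_crown:
  assumes smaller: "\<And>S. S \<subseteq> P \<Longrightarrow> card S < k \<Longrightarrow> \<exists>v. common_neighbour V E S v"
    and B: "B \<subseteq> P" "card B = k" "3 \<le> k" "\<not> (\<exists>v. common_neighbour V E B v)"
  obtains c where "crown V E P Q B c"
proof -
  have "\<exists>v. common_neighbour V E (B - {b}) v" if "b \<in> B" for b
    using that B smaller[of "B - {b}"] card_Diff1_less[of B b] by (metis card.infinite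
        not_numeral_le_zero Diff_subset order_trans)
  then obtain c where "\<And>b. b \<in> B \<Longrightarrow> common_neighbour V E (B - {b}) (c b)" by metis
  then have "crown V E P Q B c"
    using B is_graph is_bipartition by unfold_locales auto
  then show thesis by (rule that)
qed

lemma k_subsets_all_bad:
  assumes H: "C_HH V E"
    and smaller: "\<And>S. S \<subseteq> P \<Longrightarrow> card S < k \<Longrightarrow> \<exists>v. common_neighbour V E S v"
    and "3 \<le> k" and B: "B \<subseteq> P" "card B = k" "\<not> (\<exists>v. common_neighbour V E B v)"
    and W: "W \<subseteq> P" "card W = k"
  shows "\<not> (\<exists>v. common_neighbour V E W v)"
proof (rule exchange_closed_k_subsets[where \<Phi> = "\<lambda>B. \<not> (\<exists>v. common_neighbour V E B v)", OF _ _ W B])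
  show "finite P" using finite_V V_eq by (simp add: finite_Un)
  fix B' b w
  assume B': "B' \<subseteq> P" "card B' = k" "\<not> (\<exists>v. common_neighbour V E B' v)" and "b \<in> B'" "w \<in> P - B'"
  obtain c where "crown V E P Q B' c" using obtain_crown[OF smaller B'(1,2) \<open>3 \<le> k\<close> B'(3)] .
  moreover have "card {w, b} < k" using \<open>b \<in> B'\<close> \<open>w \<in> P - B'\<close> \<open>3 \<le> k\<close>
    by (auto simp: card_insert_if)
  then obtain y where "common_neighbour V E {w, b} y"
    using smaller[of "{w, b}"] \<open>b \<in> B'\<close> \<open>w \<in> P - B'\<close> B'(1) by blast
  ultimately show "\<not> (\<exists>v. common_neighbour V E (insert w (B' - {b})) v)"
    using crown.exchange_no_common_neighbour[OF _ H \<open>b \<in> B'\<close>] \<open>w \<in> P - B'\<close> by blast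
qed

lemma bad_k_subset_flips:
  assumes H: "C_HH V E"
    and smaller: "\<And>S. S \<subseteq> P \<Longrightarrow> card S < k \<Longrightarrow> \<exists>v. common_neighbour V E S v"
    and B: "B \<subseteq> P" "card B = k" "3 \<le> k" "\<not> (\<exists>v. common_neighbour V E B v)"
  shows "\<exists>B'. B' \<subseteq> Q \<and> card B' = k \<and> \<not> (\<exists>v. common_neighbour V E B' v)"
proof -
  obtain c where "crown V E P Q B c" using obtain_crown[OF smaller B] .
  then interpret crown V E P Q B c .
  show ?thesis
    using partner_in_Q card_image[OF inj_on_partner] B(2) partners_no_common_neighbour[OF H]
    by (intro exI[of _ "c ` B"]) auto
qed

lemma exists_good_k_subset:
  assumes "V \<noteq> {}" "k \<le> max_degree V E"
  shows "\<exists>W. (W \<subseteq> P \<or> W \<subseteq> Q) \<and> card W = k \<and> (\<exists>v. common_neighbour V E W v)"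
proof -
  have "max_degree V E \<in> (\<lambda>v. card {u \<in> V. E v u}) ` V"
    unfolding max_degree_def using finite_V assms(1) by simp
  then obtain v where v: "v \<in> V" "k \<le> card {u \<in> V. E v u}" using assms(2) by auto
  then obtain W where W: "W \<subseteq> {u \<in> V. E v u}" "card W = k" by (meson obtain_subset_with_card_n)
  then have "common_neighbour V E W v" using v(1) by (auto simp: common_neighbour_def)
  moreover have "W \<subseteq> P \<or> W \<subseteq> Q"
    using W(1) v(1) V_eq edge_P_Q edge_crosses by blast
  ultimately show ?thesis using W(2) by blast
qed

lemma k_subset_has_common_neighbour:
  assumes H: "C_HH V E" and "V \<noteq> {}" "k \<le> max_degree V E" "3 \<le> k"
    and smaller_P: "\<And>S. S \<subseteq> P \<Longrightarrow> card S < k \<Longrightarrow> \<exists>v. common_neighbour V E S v"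
    and smaller_Q: "\<And>S. S \<subseteq> Q \<Longrightarrow> card S < k \<Longrightarrow> \<exists>v. common_neighbour V E S v"
    and S: "S \<subseteq> P" "card S = k"
  shows "\<exists>v. common_neighbour V E S v"
proof (rule ccontr)
  assume bad: "\<not> (\<exists>v. common_neighbour V E S v)"
  then obtain S' where S': "S' \<subseteq> Q" "card S' = k" "\<not> (\<exists>v. common_neighbour V E S' v)"
    using bad_k_subset_flips[OF H smaller_P S \<open>3 \<le> k\<close>] by blast
  have "\<not> (\<exists>v. common_neighbour V E W v)" if "W \<subseteq> P \<or> W \<subseteq> Q" "card W = k" for W
    using that k_subsets_all_bad[OF H smaller_P \<open>3 \<le> k\<close> S bad]
      bipartite_graph.k_subsets_all_bad[OF swap H smaller_Q \<open>3 \<le> k\<close> S'] by blast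
  then show False using exists_good_k_subset[OF assms(2,3)] by blast
qed

lemma diam_3_has_neighbour:
  assumes "connected V E" "diam V E = 3" "s \<in> V"
  shows "\<exists>u. E s u"
proof -
  obtain x y where "x \<in> V" "y \<in> V" "gdist V E x y = 3"
    using diam_attained[OF finite_V] assms unfolding connected_def by metis
  then have "x \<noteq> y" using gdist_self by fastforce
  then show ?thesis using connected_has_neighbour[OF assms(1,3)] \<open>x \<in> V\<close> \<open>y \<in> V\<close> by metis
qed

lemma small_set_has_common_neighbour:
  assumes C: "connected V E" and D: "diam V E = 3"
    and S: "S \<subseteq> P \<or> S \<subseteq> Q" "card S \<le> 2"
  shows "\<exists>v. common_neighbour V E S v"
proof -
  have "finite S" using S(1) V_eq finite_V finite_subset by blast
  consider "card S = 0" | "card S = 1" | "card S = 2" using S(2) by linarith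
  then show ?thesis
  proof cases
    case 1
    moreover have "V \<noteq> {}" using C by (simp add: connected_def)
    ultimately show ?thesis using \<open>finite S\<close> by (auto simp: common_neighbour_def)
  next
    case 2
    then obtain s where "S = {s}" "s \<in> V" using S(1) V_eq by (auto simp: card_Suc_eq)
    moreover obtain u where "E s u" using diam_3_has_neighbour[OF C D \<open>s \<in> V\<close>] ..
    moreover have "u \<in> V" using \<open>E s u\<close> is_graph by (simp add: graph_def)
    ultimately show ?thesis using edge_sym by (auto simp: common_neighbour_def)
  next
    case 3
    then obtain s t where "S = {s, t}" "s \<noteq> t" by (auto simp: card_2_iff)
    then show ?thesis
      using S(1) same_side_common_neighbour[OF C D]
        bipartite_graph.same_side_common_neighbour[OF swap C D] by auto
  qed
qed

lemma common_neighbour_if_diam_3: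
  assumes C: "connected V E" and H: "C_HH V E" and D: "diam V E = 3"
  shows "k \<le> max_degree V E \<Longrightarrow> S \<subseteq> P \<or> S \<subseteq> Q \<Longrightarrow> card S = k \<Longrightarrow>
    \<exists>v. common_neighbour V E S v"
proof (induction k arbitrary: S rule: less_induct)
  case (less k)
  have "V \<noteq> {}" using C by (simp add: connected_def)
  have smaller: "\<exists>v. common_neighbour V E S' v" if "S' \<subseteq> P \<or> S' \<subseteq> Q" "card S' < k" for S'
    using less.IH[OF that(2) _ that(1)] that(2) less.prems(1) by simp
  show ?case
  proof (cases "k \<le> 2")
    case True
    then show ?thesis using small_set_has_common_neighbour[OF C D less.prems(2)] less.prems(3) by simp
  next
    case False
    then have "3 \<le> k" by simp
    note k_subset = k_subset_has_common_neighbour[OF H \<open>V \<noteq> {}\<close> less.prems(1) \<open>3 \<le> k\<close>]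
      bipartite_graph.k_subset_has_common_neighbour[OF swap H \<open>V \<noteq> {}\<close> less.prems(1) \<open>3 \<le> k\<close>]
    show ?thesis using less.prems(2,3) k_subset smaller by blast
  qed
qed

end

theorem lemma5p9:
  fixes V X Y :: "'a set" and E :: "'a \<Rightarrow> 'a \<Rightarrow> bool"
  assumes "graph V E" and "connected V E" and "bipartition V E X Y" and "C_HH V E"
  shows "(embeds {0..<6} C6_edge V E \<or> embeds {0..<6} two_squares_edge V E \<longrightarrow> diam V E = 3)
    \<and> (diam V E = 3 \<longrightarrow> (\<forall>k \<le> max_degree V E.
          (\<forall>S. S \<subseteq> X \<and> card S = k \<longrightarrow> (\<exists>v. common_neighbour V E S v)) \<and>
          (\<forall>S. S \<subseteq> Y \<and> card S = k \<longrightarrow> (\<exists>v. common_neighbour V E S v))))"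
proof -
  interpret bipartite_graph V E X Y using assms(1,3) by unfold_locales
  show ?thesis
    using diam_eq_3_if_embeds[OF assms(2,4)] common_neighbour_if_diam_3[OF assms(2,4)] by blast
qed

end
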